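(* Let $(\rhd,\nu,\phi)$ and $(\rhd,\nu,\phi')$ be two persistent craving representations (same $\rhd$ and $\nu$) with associated random choice rules $p$ and $p'$. Let $x\in X$ and $y\in X\setminus\{x\}$ with $y\ne M(\rhd,X\setminus\{x\})$. Then $$p(y,X)-p(y,X\setminus\{x\})>p'(y,X)-p'(y,X\setminus\{x\})$$ if and only if $\phi(M(\rhd,X\setminus\{x\}),x)>\phi'(M(\rhd,X\setminus\{x\}),x)$.
   Context: $X$ is a finite set, $\mathcal{X}$ its nonempty subsets, $\mathcal{L}(X)$ its linear orders, $M(\succ,A)$ the $\succ$-maximal element of $A$, $N(x,A)=\{\succ: x\succ y\ \forall y\in A\setminus\{x\}\}$. Given a linear order $\rhd$, the craving preferences $\{\succ_x\}_{x\in X}$ are: $x\succ_x y$ for all $y\neq x$, and for $y,z\ne x$, $y\succ_x z$ iff $y\rhd z$. A distribution $\nu$ supported on $\{\succ_x\}$ is craving monotonic w.r.t. $\rhd$ if $x\rhd y$ implies $\nu(\succ_x)>\nu(\succ_y)>0$. A persistence function is $\phi:X^2\to[0,1)$ with $\phi(x,x)=0$, $\phi(x,y)>0$ for $x\ne y$. A persistent craving representation $(\rhd,\nu,\phi)$ (with $\nu$ craving monotonic) determines the transition function $t(x,\succ_y)=\phi(x,y)\delta_{\succ_y}+(1-\phi(x,y))\nu$, $t(x,\succ)=\nu$ for $\succ$ outside the support of $\nu$; for each $A\in\mathcal{X}$, $\nu_A$ is the unique stationary distribution of the chain $m_A(\succ,\succ')=t_{\succ'}(M(\succ,A),\succ)$,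 and the associated random choice rule is $p(x,A)=\sum_{\succ\in N(x,A)}\nu_A(\succ)$. *)

theory Defs
  imports Complex_Main
begin

(* Preferences are strict linear orders on the finite ground set X, as relations;
   (a,b) \<in> r means "a is strictly preferred to b". *)
definition LinOrd :: "'a set \<Rightarrow> 'a rel set" where
  "LinOrd X = {r. r \<subseteq> X \<times> X \<and> strict_linear_order_on X r}"

definition Mx :: "'a rel \<Rightarrow> 'a set \<Rightarrow> 'a" where
  "Mx r A = (THE x. x \<in> A \<and> (\<forall>y\<in>A - {x}. (x, y) \<in> r))"

definition Nset :: "'a set \<Rightarrow> 'a \<Rightarrow> 'a set \<Rightarrow> 'a rel set" where
  "Nset X x A = {r \<in> LinOrd X. \<forall>y\<in>A - {x}. (x, y) \<in> r}"

definition crav :: "'a set \<Rightarrow> 'a rel \<Rightarrow> 'a \<Rightarrow> 'a rel" where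
  "crav X R x = {(a, b). a \<in> X \<and> b \<in> X \<and> a \<noteq> b \<and> (a = x \<or> (b \<noteq> x \<and> (a, b) \<in> R))}"

definition is_dist :: "'a set \<Rightarrow> ('a rel \<Rightarrow> real) \<Rightarrow> bool" where
  "is_dist X \<mu> \<longleftrightarrow> (\<forall>r. r \<notin> LinOrd X \<longrightarrow> \<mu> r = 0) \<and> (\<forall>r\<in>LinOrd X. \<mu> r \<ge> 0)
      \<and> sum \<mu> (LinOrd X) = 1"

definition craving_monotonic :: "'a set \<Rightarrow> 'a rel \<Rightarrow> ('a rel \<Rightarrow> real) \<Rightarrow> bool" where
  "craving_monotonic X R \<nu> \<longleftrightarrow>
     is_dist X \<nu> \<and> (\<forall>r. \<nu> r \<noteq> 0 \<longrightarrow> (\<exists>x\<in>X. r = crav X R x))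
     \<and> (\<forall>x\<in>X. \<forall>y\<in>X. (x, y) \<in> R \<longrightarrow> \<nu> (crav X R x) > \<nu> (crav X R y) \<and> \<nu> (crav X R y) > 0)"

definition persistence :: "'a set \<Rightarrow> ('a \<Rightarrow> 'a \<Rightarrow> real) \<Rightarrow> bool" where
  "persistence X \<phi> \<longleftrightarrow> (\<forall>x\<in>X. \<forall>y\<in>X. 0 \<le> \<phi> x y \<and> \<phi> x y < 1)
     \<and> (\<forall>x\<in>X. \<phi> x x = 0) \<and> (\<forall>x\<in>X. \<forall>y\<in>X. x \<noteq> y \<longrightarrow> \<phi> x y > 0)"

definition pcr :: "'a set \<Rightarrow> 'a rel \<Rightarrow> ('a rel \<Rightarrow> real) \<Rightarrow> ('a \<Rightarrow> 'a \<Rightarrow> real) \<Rightarrow> bool" where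
  "pcr X R \<nu> \<phi> \<longleftrightarrow> finite X \<and> R \<in> LinOrd X \<and> craving_monotonic X R \<nu> \<and> persistence X \<phi>"

(* transition function: tr X R nu phi x r r' = t(x, r)(r') *)
definition tr :: "'a set \<Rightarrow> 'a rel \<Rightarrow> ('a rel \<Rightarrow> real) \<Rightarrow> ('a \<Rightarrow> 'a \<Rightarrow> real)
                  \<Rightarrow> 'a \<Rightarrow> 'a rel \<Rightarrow> 'a rel \<Rightarrow> real" where
  "tr X R \<nu> \<phi> x r r' =
     (if (\<exists>y\<in>X. r = crav X R y) \<and> \<nu> r \<noteq> 0 then
        (let y = (THE y. y \<in> X \<and> r = crav X R y) in
           \<phi> x y * (if r' = r then 1 else 0) + (1 - \<phi> x y) * \<nu> r')
      else \<nu> r')"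

definition mA :: "'a set \<Rightarrow> 'a rel \<Rightarrow> ('a rel \<Rightarrow> real) \<Rightarrow> ('a \<Rightarrow> 'a \<Rightarrow> real)
                  \<Rightarrow> 'a set \<Rightarrow> 'a rel \<Rightarrow> 'a rel \<Rightarrow> real" where
  "mA X R \<nu> \<phi> A r r' = tr X R \<nu> \<phi> (Mx r A) r r'"

definition stationary :: "'a set \<Rightarrow> ('a rel \<Rightarrow> 'a rel \<Rightarrow> real) \<Rightarrow> ('a rel \<Rightarrow> real) \<Rightarrow> bool" where
  "stationary X m \<mu> \<longleftrightarrow> is_dist X \<mu> \<and>
     (\<forall>r'\<in>LinOrd X. \<mu> r' = (\<Sum>r\<in>LinOrd X. \<mu> r * m r r'))"

definition nuA :: "'a set \<Rightarrow> 'a rel \<Rightarrow> ('a rel \<Rightarrow> real) \<Rightarrow> ('a \<Rightarrow> 'a \<Rightarrow> real)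
                   \<Rightarrow> 'a set \<Rightarrow> 'a rel \<Rightarrow> real" where
  "nuA X R \<nu> \<phi> A = (THE \<mu>. stationary X (mA X R \<nu> \<phi> A) \<mu>)"

definition pchoice :: "'a set \<Rightarrow> 'a rel \<Rightarrow> ('a rel \<Rightarrow> real) \<Rightarrow> ('a \<Rightarrow> 'a \<Rightarrow> real)
                       \<Rightarrow> 'a \<Rightarrow> 'a set \<Rightarrow> real" where
  "pchoice X R \<nu> \<phi> x A = (\<Sum>r\<in>Nset X x A. nuA X R \<nu> \<phi> A r)"

end

theory Submission
  imports Defs
begin

(* On a menu A the chain only visits the craving states \<succ>_z: from \<succ>_z the agent chooses
   M(\<succ>_z, A) and keeps craving z with probability c_z = \<phi>(M(\<succ>_z, A), z), otherwise it
   redraws from \<nu>. Such a sticky resampling chain has a unique stationary law, proportional to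
   \<nu>(\<succ>_z) / (1 - c_z). On the full menu every c_z vanishes, so p(y, X) = \<nu>(\<succ>_y). On X - {x}
   only c_x = \<phi>(M(\<rhd>, X - {x}), x) survives, and as y is not the \<rhd>-top of X - {x}, the only
   craving state choosing y is \<succ>_y; hence p(y, X - {x}) = \<nu>(\<succ>_y) / (1 + \<nu>(\<succ>_x) c_x / (1 - c_x)).
   The loss p(y, X) - p(y, X - {x}) is therefore strictly increasing in c_x. *)

definition sticky_stationary :: "'i set \<Rightarrow> ('i \<Rightarrow> real) \<Rightarrow> ('i \<Rightarrow> real) \<Rightarrow> 'i \<Rightarrow> real" where
  "sticky_stationary I \<nu> c j = \<nu> j / (1 - c j) / (\<Sum>k\<in>I. \<nu> k / (1 - c k))"

lemma sticky_inflow_eq: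
  fixes \<mu> \<nu> c :: "'i \<Rightarrow> real"
  assumes "finite I" and "j \<in> I"
  shows "(\<Sum>i\<in>I. \<mu> i * ((if i = j then c i else 0) + (1 - c i) * \<nu> j))
           = \<mu> j * c j + (\<Sum>i\<in>I. \<mu> i * (1 - c i)) * \<nu> j"
proof -
  have "(\<Sum>i\<in>I. \<mu> i * ((if i = j then c i else 0) + (1 - c i) * \<nu> j))
      = (\<Sum>i\<in>I. (if i = j then \<mu> i * c i else 0) + \<mu> i * (1 - c i) * \<nu> j)"
    by (intro sum.cong) (auto simp: algebra_simps)
  then show ?thesis
    using assms by (simp add: sum.distrib sum_distrib_right)
qed

lemma sticky_normaliser_pos:
  fixes \<nu> c :: "'i \<Rightarrow> real"
  assumes "finite I" and "\<forall>i\<in>I. 0 \<le> \<nu> i" and "sum \<nu> I = 1" and "\<forall>i\<in>I. c i < 1"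
  shows "0 < (\<Sum>k\<in>I. \<nu> k / (1 - c k))"
proof -
  obtain k where "k \<in> I" and "0 < \<nu> k"
    using assms(2,3) sum_nonpos[of I \<nu>] by force
  then show ?thesis
    using assms by (intro sum_pos2) auto
qed

lemma sticky_stationary_balanced:
  fixes \<nu> c :: "'i \<Rightarrow> real"
  assumes fin: "finite I" and \<nu>_nonneg: "\<forall>i\<in>I. 0 \<le> \<nu> i" and \<nu>_sum: "sum \<nu> I = 1"
    and c_less: "\<forall>i\<in>I. c i < 1"
  defines "w \<equiv> sticky_stationary I \<nu> c"
  shows "sum w I = 1 \<and> (\<forall>j\<in>I. w j = (\<Sum>i\<in>I. w i * ((if i = j then c i else 0) + (1 - c i) * \<nu> j)))"
proof (intro conjI ballI)
  define S where "S = (\<Sum>k\<in>I. \<nu> k / (1 - c k))"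
  have S_pos: "0 < S"
    unfolding S_def using sticky_normaliser_pos[OF fin \<nu>_nonneg \<nu>_sum c_less] .
  have "sum w I = (\<Sum>j\<in>I. \<nu> j / (1 - c j)) / S"
    unfolding w_def sticky_stationary_def S_def sum_divide_distrib by simp
  then show "sum w I = 1"
    using S_pos unfolding S_def by simp
  have "(\<Sum>i\<in>I. w i * (1 - c i)) = (\<Sum>i\<in>I. \<nu> i / S)"
    using c_less by (intro sum.cong) (auto simp: w_def sticky_stationary_def S_def)
  then have K: "(\<Sum>i\<in>I. w i * (1 - c i)) = 1 / S"
    using \<nu>_sum by (simp add: sum_divide_distrib[symmetric])
  fix j assume "j \<in> I"
  then have "1 - c j \<noteq> 0"
    using c_less by auto
  then have "w j = w j * c j + 1 / S * \<nu> j"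
    using S_pos unfolding w_def sticky_stationary_def S_def[symmetric] by (simp add: field_simps)
  then show "w j = (\<Sum>i\<in>I. w i * ((if i = j then c i else 0) + (1 - c i) * \<nu> j))"
    unfolding sticky_inflow_eq[OF fin \<open>j \<in> I\<close>] K .
qed

lemma sticky_stationary_iff:
  fixes \<mu> \<nu> c :: "'i \<Rightarrow> real"
  assumes fin: "finite I" and "\<forall>i\<in>I. 0 \<le> \<nu> i" and "sum \<nu> I = 1" and c_less: "\<forall>i\<in>I. c i < 1"
  shows "sum \<mu> I = 1 \<and> (\<forall>j\<in>I. \<mu> j = (\<Sum>i\<in>I. \<mu> i * ((if i = j then c i else 0) + (1 - c i) * \<nu> j)))
     \<longleftrightarrow> (\<forall>j\<in>I. \<mu> j = sticky_stationary I \<nu> c j)"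
    (is "?balanced \<mu> \<longleftrightarrow> _")
proof
  assume "?balanced \<mu>"
  define S where "S = (\<Sum>k\<in>I. \<nu> k / (1 - c k))"
  define K where "K = (\<Sum>i\<in>I. \<mu> i * (1 - c i))"
  have \<mu>_K: "\<mu> j = K * (\<nu> j / (1 - c j))" if "j \<in> I" for j
  proof -
    have "\<mu> j = (\<Sum>i\<in>I. \<mu> i * ((if i = j then c i else 0) + (1 - c i) * \<nu> j))"
      using \<open>?balanced \<mu>\<close> that by blast
    then have "\<mu> j = \<mu> j * c j + K * \<nu> j"
      unfolding K_def sticky_inflow_eq[OF fin that] .
    then show ?thesis
      using c_less that by (auto simp: field_simps)
  qed
  have "1 = K * S"
    using conjunct1[OF \<open>?balanced \<mu>\<close>] \<mu>_K unfolding S_def by (simp add: sum_distrib_left)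
  moreover have "0 < S"
    unfolding S_def using sticky_normaliser_pos[OF assms] .
  ultimately have "K = 1 / S"
    by (simp add: field_simps)
  then show "\<forall>j\<in>I. \<mu> j = sticky_stationary I \<nu> c j"
    using \<mu>_K unfolding sticky_stationary_def S_def[symmetric] by simp
next
  assume \<mu>_eq: "\<forall>j\<in>I. \<mu> j = sticky_stationary I \<nu> c j"
  note w_balanced = sticky_stationary_balanced[OF assms]
  show "?balanced \<mu>"
  proof (intro conjI ballI)
    show "sum \<mu> I = 1"
      using \<mu>_eq conjunct1[OF w_balanced] by (simp cong: sum.cong)
    fix j assume "j \<in> I"
    then have "\<mu> j = sticky_stationary I \<nu> c j"
      using \<mu>_eq by blast
    also have "\<dots> = (\<Sum>i\<in>I. sticky_stationary I \<nu> c i * ((if i = j then c i else 0) + (1 - c i) * \<nu> j))"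
      using conjunct2[OF w_balanced] \<open>j \<in> I\<close> by blast
    also have "\<dots> = (\<Sum>i\<in>I. \<mu> i * ((if i = j then c i else 0) + (1 - c i) * \<nu> j))"
      using \<mu>_eq by (simp cong: sum.cong)
    finally show "\<mu> j = (\<Sum>i\<in>I. \<mu> i * ((if i = j then c i else 0) + (1 - c i) * \<nu> j))" .
  qed
qed

lemma sticky_stationary_nonneg:
  assumes "\<forall>i\<in>I. 0 \<le> \<nu> i" and "\<forall>i\<in>I. c i < 1" and "j \<in> I"
  shows "0 \<le> sticky_stationary I \<nu> c j"
  using assms unfolding sticky_stationary_def by (intro divide_nonneg_nonneg sum_nonneg) auto

lemma strict_mono_on_odds_loss:
  fixes n q :: real
  assumes "0 < n" and "0 < q"
  shows "strict_mono_on {0..<1} (\<lambda>u. n - n / (1 + q * (u / (1 - u))))"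
proof (rule strict_mono_onI)
  fix u u' :: real assume "u \<in> {0..<1}" and "u' \<in> {0..<1}" and "u < u'"
  then have "u / (1 - u) < u' / (1 - u')"
    by (simp add: frac_less2 divide_strict_right_mono field_simps)
  then have "q * (u / (1 - u)) < q * (u' / (1 - u'))"
    using assms(2) by (rule mult_strict_left_mono)
  then have "1 + q * (u / (1 - u)) < 1 + q * (u' / (1 - u'))"
    by simp
  moreover have "0 < 1 + q * (u / (1 - u))"
    using \<open>u \<in> {0..<1}\<close> assms(2) by (simp add: add_pos_nonneg)
  ultimately have "n / (1 + q * (u' / (1 - u'))) < n / (1 + q * (u / (1 - u)))"
    using assms(1) by (intro divide_strict_left_mono) auto
  then show "n - n / (1 + q * (u / (1 - u))) < n - n / (1 + q * (u' / (1 - u')))"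
    by simp
qed

lemma LinOrd_iff: "r \<in> LinOrd X \<longleftrightarrow> r \<subseteq> X \<times> X \<and> trans r \<and> irrefl r \<and> total_on X r"
  by (simp add: LinOrd_def strict_linear_order_on_def)

lemma LinOrd_asym: "r \<in> LinOrd X \<Longrightarrow> (a, b) \<in> r \<Longrightarrow> (b, a) \<notin> r"
  by (meson LinOrd_iff irreflD transD)

lemma LinOrd_total: "r \<in> LinOrd X \<Longrightarrow> a \<in> X \<Longrightarrow> b \<in> X \<Longrightarrow> a \<noteq> b \<Longrightarrow> (a, b) \<in> r \<or> (b, a) \<in> r"
  by (simp add: LinOrd_iff total_on_def)

lemma finite_LinOrd: "finite X \<Longrightarrow> finite (LinOrd X)"
  by (rule finite_subset[of _ "Pow (X \<times> X)"]) (auto simp: LinOrd_def)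

lemma Mx_eqI:
  assumes "r \<in> LinOrd X" and "m \<in> A" and "\<forall>v\<in>A - {m}. (m, v) \<in> r"
  shows "Mx r A = m"
  unfolding Mx_def
proof (rule the_equality)
  fix m' assume m': "m' \<in> A \<and> (\<forall>v\<in>A - {m'}. (m', v) \<in> r)"
  show "m' = m"
  proof (rule ccontr)
    assume "m' \<noteq> m"
    then have "(m', m) \<in> r" and "(m, m') \<in> r"
      using m' assms(2,3) by auto
    then show False
      using LinOrd_asym[OF assms(1)] by blast
  qed
qed (use assms in blast)

lemma LinOrd_has_greatest:
  assumes "r \<in> LinOrd X" and "finite A" and "A \<noteq> {}" and "A \<subseteq> X"
  shows "\<exists>m\<in>A. \<forall>v\<in>A - {m}. (m, v) \<in> r"
  using assms(2-4)
proof (induction A rule: finite_ne_induct)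
  case (insert a F)
  then obtain m where m: "m \<in> F" "\<forall>v\<in>F - {m}. (m, v) \<in> r" by auto
  show ?case
  proof (cases "(a, m) \<in> r")
    case True
    have "(a, v) \<in> r" if "v \<in> insert a F - {a}" for v
    proof (cases "v = m")
      case False
      then have "(m, v) \<in> r" using m that by blast
      with True show ?thesis using assms(1) by (meson LinOrd_iff transD)
    qed (use True in simp)
    then show ?thesis by blast
  next
    case False
    then have "(m, a) \<in> r"
      using LinOrd_total[OF assms(1), of a m] insert m by auto
    then show ?thesis
      using m by (intro bexI[of _ m]) auto
  qed
qed auto

lemma
  assumes "r \<in> LinOrd X" and "finite A" and "A \<noteq> {}" and "A \<subseteq> X"
  shows Mx_mem: "Mx r A \<in> A"
    and Mx_greatest: "v \<in> A \<Longrightarrow> v \<noteq> Mx r A \<Longrightarrow> (Mx r A, v) \<in> r"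
proof -
  obtain m where m: "m \<in> A" "\<forall>v\<in>A - {m}. (m, v) \<in> r"
    using LinOrd_has_greatest[OF assms] by blast
  moreover have "Mx r A = m"
    using Mx_eqI[OF assms(1) m] .
  ultimately show "Mx r A \<in> A" and "v \<in> A \<Longrightarrow> v \<noteq> Mx r A \<Longrightarrow> (Mx r A, v) \<in> r"
    by auto
qed

lemma crav_LinOrd:
  assumes "R \<in> LinOrd X"
  shows "crav X R z \<in> LinOrd X"
  unfolding LinOrd_iff
proof (intro conjI)
  show "crav X R z \<subseteq> X \<times> X" and "irrefl (crav X R z)"
    by (auto simp: crav_def irrefl_def)
  show "total_on X (crav X R z)"
    using LinOrd_total[OF assms] by (auto simp: crav_def total_on_def)
  show "trans (crav X R z)"
  proof (rule transI)
    fix a b c assume "(a, b) \<in> crav X R z" and "(b, c) \<in> crav X R z"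
    moreover have "(a, b) \<in> R \<Longrightarrow> (b, c) \<in> R \<Longrightarrow> (a, c) \<in> R"
      using assms by (meson LinOrd_iff transD)
    ultimately show "(a, c) \<in> crav X R z"
      using LinOrd_asym[OF assms, of a b] unfolding crav_def by auto
  qed
qed

lemma inj_on_crav: "inj_on (crav X R) X"
proof (rule inj_onI)
  fix z w assume "z \<in> X" and "w \<in> X" and crav_eq: "crav X R z = crav X R w"
  show "z = w"
  proof (rule ccontr)
    assume "z \<noteq> w"
    then have "(z, w) \<in> crav X R z" and "(z, w) \<notin> crav X R w"
      using \<open>z \<in> X\<close> \<open>w \<in> X\<close> unfolding crav_def by auto
    then show False
      using crav_eq by simp
  qed
qed

lemma the_crav: "z \<in> X \<Longrightarrow> (THE y. y \<in> X \<and> crav X R z = crav X R y) = z"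
  using inj_on_crav[of X R] by (auto intro!: the_equality dest: inj_onD)

lemma Mx_crav_mem: "R \<in> LinOrd X \<Longrightarrow> A \<subseteq> X \<Longrightarrow> z \<in> A \<Longrightarrow> Mx (crav X R z) A = z"
  by (rule Mx_eqI[OF crav_LinOrd]) (auto simp: crav_def)

lemma Mx_crav_notin:
  assumes "R \<in> LinOrd X" and "finite A" and "A \<noteq> {}" and "A \<subseteq> X" and "z \<notin> A"
  shows "Mx (crav X R z) A = Mx R A"
  using Mx_mem[OF assms(1-4)] Mx_greatest[OF assms(1-4)] assms(4,5)
  by (intro Mx_eqI[OF crav_LinOrd[OF assms(1)]]) (auto simp: crav_def)

lemma crav_mem_Nset_iff:
  assumes "R \<in> LinOrd X" and "finite A" and "A \<subseteq> X" and "y \<in> A" and "z \<in> X"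
  shows "crav X R z \<in> Nset X y A \<longleftrightarrow> z = y \<or> (z \<notin> A \<and> y = Mx R A)"
proof -
  have "crav X R z \<in> Nset X y A \<longleftrightarrow> (\<forall>v\<in>A - {y}. (y, v) \<in> crav X R z)"
    unfolding Nset_def using crav_LinOrd[OF assms(1)] by blast
  also have "\<dots> \<longleftrightarrow> z = y \<or> (z \<notin> A \<and> y = Mx R A)"
  proof (cases "z \<in> A")
    case True
    then show ?thesis
      using assms(3,4) by (auto simp: crav_def)
  next
    case False
    then have "(\<forall>v\<in>A - {y}. (y, v) \<in> crav X R z) \<longleftrightarrow> (\<forall>v\<in>A - {y}. (y, v) \<in> R)"
      using assms(3,4) by (auto simp: crav_def)
    also have "\<dots> \<longleftrightarrow> y = Mx R A"
    proof
      assume "\<forall>v\<in>A - {y}. (y, v) \<in> R"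
      then show "y = Mx R A"
        using Mx_eqI[OF assms(1,4)] by simp
    next
      assume "y = Mx R A"
      then show "\<forall>v\<in>A - {y}. (y, v) \<in> R"
        using Mx_greatest[OF assms(1,2) _ assms(3)] assms(4) by blast
    qed
    finally show ?thesis
      using False assms(4) by auto
  qed
  finally show ?thesis .
qed

lemma sum_LinOrd_crav:
  assumes "finite X" and "R \<in> LinOrd X" and "\<forall>r\<in>LinOrd X - crav X R ` X. f r = 0"
  shows "sum f (LinOrd X) = (\<Sum>z\<in>X. f (crav X R z))"
proof -
  have "sum f (LinOrd X) = sum f (crav X R ` X)"
    using assms crav_LinOrd by (intro sum.mono_neutral_right finite_LinOrd) auto
  also have "\<dots> = (\<Sum>z\<in>X. f (crav X R z))"
    by (rule sum.reindex[OF inj_on_crav, unfolded comp_def])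
  finally show ?thesis .
qed

definition menu_persistence :: "'a set \<Rightarrow> 'a rel \<Rightarrow> ('a \<Rightarrow> 'a \<Rightarrow> real) \<Rightarrow> 'a set \<Rightarrow> 'a \<Rightarrow> real" where
  "menu_persistence X R \<phi> A z = \<phi> (Mx (crav X R z) A) z"

locale persistent_craving =
  fixes X :: "'a set" and R :: "'a rel" and \<nu> :: "'a rel \<Rightarrow> real" and \<phi> :: "'a \<Rightarrow> 'a \<Rightarrow> real"
  assumes pcr: "pcr X R \<nu> \<phi>"
begin

abbreviation craving :: "'a \<Rightarrow> 'a rel" where
  "craving \<equiv> crav X R"

lemma finite_X: "finite X"
  and R_LinOrd: "R \<in> LinOrd X"
  and monotonic: "craving_monotonic X R \<nu>"
  and persistent: "persistence X \<phi>"
  using pcr unfolding pcr_def by auto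

lemma \<nu>_null: "r \<notin> craving ` X \<Longrightarrow> \<nu> r = 0"
  using monotonic unfolding craving_monotonic_def by blast

lemma \<nu>_craving_sum: "(\<Sum>z\<in>X. \<nu> (craving z)) = 1"
proof -
  have "(\<Sum>r\<in>LinOrd X. \<nu> r) = 1"
    using monotonic unfolding craving_monotonic_def is_dist_def by blast
  then show ?thesis
    using sum_LinOrd_crav[OF finite_X R_LinOrd, of \<nu>] \<nu>_null by simp
qed

lemma \<nu>_craving_pos:
  assumes "z \<in> X"
  shows "0 < \<nu> (craving z)"
proof (cases "X = {z}")
  case True
  then show ?thesis
    using \<nu>_craving_sum by simp
next
  case False
  then obtain v where "v \<in> X" and "v \<noteq> z"
    using assms by blast
  then have "(z, v) \<in> R \<or> (v, z) \<in> R"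
    using LinOrd_total[OF R_LinOrd] assms by blast
  then show ?thesis
    using monotonic assms \<open>v \<in> X\<close> unfolding craving_monotonic_def by force
qed

lemma menu_persistence_eq:
  assumes "A \<subseteq> X" and "A \<noteq> {}" and "z \<in> X"
  shows "menu_persistence X R \<phi> A z = (if z \<in> A then 0 else \<phi> (Mx R A) z)"
  using Mx_crav_mem[OF R_LinOrd assms(1)] Mx_crav_notin[OF R_LinOrd _ assms(2,1)]
    finite_subset[OF assms(1) finite_X] persistent assms(3)
  unfolding menu_persistence_def persistence_def by auto

lemma menu_persistence_range:
  assumes "A \<subseteq> X" and "A \<noteq> {}" and "z \<in> X"
  shows "0 \<le> menu_persistence X R \<phi> A z \<and> menu_persistence X R \<phi> A z < 1"
proof -
  have "Mx R A \<in> X"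
    using Mx_mem[OF R_LinOrd finite_subset[OF assms(1) finite_X] assms(2,1)] assms(1) by blast
  then show ?thesis
    using menu_persistence_eq[OF assms] persistent assms(3) unfolding persistence_def by auto
qed

lemma mA_craving:
  assumes "z \<in> X"
  shows "mA X R \<nu> \<phi> A (craving z) r'
           = (if craving z = r' then menu_persistence X R \<phi> A z else 0)
             + (1 - menu_persistence X R \<phi> A z) * \<nu> r'"
  using assms \<nu>_craving_pos[OF assms]
  by (auto simp: mA_def tr_def menu_persistence_def the_crav Let_def)

lemma mA_to_null: "r' \<notin> craving ` X \<Longrightarrow> mA X R \<nu> \<phi> A r r' = 0"
  using \<nu>_null[of r'] by (auto simp: mA_def tr_def Let_def)

lemma mA_inflow:
  assumes null: "\<forall>r. r \<notin> craving ` X \<longrightarrow> \<mu> r = 0" and "v \<in> X"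
  shows "(\<Sum>r\<in>LinOrd X. \<mu> r * mA X R \<nu> \<phi> A r (craving v))
           = (\<Sum>z\<in>X. \<mu> (craving z) * ((if z = v then menu_persistence X R \<phi> A z else 0)
                                        + (1 - menu_persistence X R \<phi> A z) * \<nu> (craving v)))"
proof -
  have "(\<Sum>r\<in>LinOrd X. \<mu> r * mA X R \<nu> \<phi> A r (craving v))
      = (\<Sum>z\<in>X. \<mu> (craving z) * mA X R \<nu> \<phi> A (craving z) (craving v))"
    using null by (intro sum_LinOrd_crav[OF finite_X R_LinOrd]) auto
  also have "\<dots> = (\<Sum>z\<in>X. \<mu> (craving z) * ((if z = v then menu_persistence X R \<phi> A z else 0)
                                        + (1 - menu_persistence X R \<phi> A z) * \<nu> (craving v)))"
    using inj_on_crav[of X R] \<open>v \<in> X\<close> by (intro sum.cong) (auto simp: mA_craving dest: inj_onD)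
  finally show ?thesis .
qed

lemma stationary_mA_null:
  assumes "stationary X (mA X R \<nu> \<phi> A) \<mu>" and "r \<notin> craving ` X"
  shows "\<mu> r = 0"
proof (cases "r \<in> LinOrd X")
  case True
  then show ?thesis
    using assms mA_to_null[OF assms(2)] unfolding stationary_def by simp
next
  case False
  then show ?thesis
    using assms(1) unfolding stationary_def is_dist_def by blast
qed

lemma mA_balance_iff:
  assumes null: "\<forall>r. r \<notin> craving ` X \<longrightarrow> \<mu> r = 0"
  shows "(\<forall>r'\<in>LinOrd X. \<mu> r' = (\<Sum>r\<in>LinOrd X. \<mu> r * mA X R \<nu> \<phi> A r r')) \<longleftrightarrow>
           (\<forall>v\<in>X. \<mu> (craving v) = (\<Sum>z\<in>X. \<mu> (craving z) *
              ((if z = v then menu_persistence X R \<phi> A z else 0)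
               + (1 - menu_persistence X R \<phi> A z) * \<nu> (craving v))))"
    (is "?stat \<longleftrightarrow> ?balance")
proof
  assume ?stat
  show ?balance
  proof
    fix v assume "v \<in> X"
    have "\<mu> (craving v) = (\<Sum>r\<in>LinOrd X. \<mu> r * mA X R \<nu> \<phi> A r (craving v))"
      using \<open>?stat\<close> crav_LinOrd[OF R_LinOrd] by blast
    then show "\<mu> (craving v) = (\<Sum>z\<in>X. \<mu> (craving z) *
        ((if z = v then menu_persistence X R \<phi> A z else 0)
         + (1 - menu_persistence X R \<phi> A z) * \<nu> (craving v)))"
      unfolding mA_inflow[OF null \<open>v \<in> X\<close>] .
  qed
next
  assume ?balance
  show ?stat
  proof
    fix r' show "\<mu> r' = (\<Sum>r\<in>LinOrd X. \<mu> r * mA X R \<nu> \<phi> A r r')"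
    proof (cases "r' \<in> craving ` X")
      case True
      then obtain v where "v \<in> X" and "r' = craving v" by blast
      with \<open>?balance\<close> mA_inflow[OF null \<open>v \<in> X\<close>] show ?thesis
        by simp
    next
      case False
      then show ?thesis
        using null mA_to_null by simp
    qed
  qed
qed

lemma stationary_mA_reduce:
  assumes null: "\<forall>r. r \<notin> craving ` X \<longrightarrow> \<mu> r = 0"
  shows "stationary X (mA X R \<nu> \<phi> A) \<mu> \<longleftrightarrow>
           (\<forall>z\<in>X. 0 \<le> \<mu> (craving z)) \<and> (\<Sum>z\<in>X. \<mu> (craving z)) = 1 \<and>
           (\<forall>v\<in>X. \<mu> (craving v) = (\<Sum>z\<in>X. \<mu> (craving z) *
              ((if z = v then menu_persistence X R \<phi> A z else 0)
               + (1 - menu_persistence X R \<phi> A z) * \<nu> (craving v))))"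
    (is "_ \<longleftrightarrow> ?nonneg \<and> _")
proof -
  have off_LinOrd: "\<forall>r. r \<notin> LinOrd X \<longrightarrow> \<mu> r = 0"
  proof (intro allI impI)
    fix r assume "r \<notin> LinOrd X"
    then have "r \<notin> craving ` X"
      using crav_LinOrd[OF R_LinOrd] by auto
    then show "\<mu> r = 0"
      using null by blast
  qed
  have sum_eq: "sum \<mu> (LinOrd X) = (\<Sum>z\<in>X. \<mu> (craving z))"
    using null by (intro sum_LinOrd_crav[OF finite_X R_LinOrd]) auto
  have "0 \<le> \<mu> r" if ?nonneg for r
    using that null by (cases "r \<in> craving ` X") auto
  then have nonneg_iff: "(\<forall>r\<in>LinOrd X. 0 \<le> \<mu> r) \<longleftrightarrow> ?nonneg"
    using crav_LinOrd[OF R_LinOrd] by blast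
  show ?thesis
    unfolding stationary_def is_dist_def sum_eq nonneg_iff mA_balance_iff[OF null]
    using off_LinOrd by blast
qed

lemma stationary_mA_iff:
  assumes "A \<subseteq> X" and "A \<noteq> {}"
  shows "stationary X (mA X R \<nu> \<phi> A) \<mu> \<longleftrightarrow>
           (\<forall>r. r \<notin> craving ` X \<longrightarrow> \<mu> r = 0) \<and>
           (\<forall>z\<in>X. \<mu> (craving z)
                    = sticky_stationary X (\<lambda>z. \<nu> (craving z)) (menu_persistence X R \<phi> A) z)"
    (is "_ \<longleftrightarrow> ?null \<and> ?formula")
proof -
  have \<nu>_nonneg: "\<forall>z\<in>X. 0 \<le> \<nu> (craving z)"
    using \<nu>_craving_pos by (simp add: less_imp_le)
  have c_less: "\<forall>z\<in>X. menu_persistence X R \<phi> A z < 1"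
    using menu_persistence_range[OF assms] by blast
  note sticky = sticky_stationary_iff[OF finite_X \<nu>_nonneg \<nu>_craving_sum c_less,
      where \<mu> = "\<lambda>z. \<mu> (craving z)"]
  show ?thesis
  proof
    assume stat: "stationary X (mA X R \<nu> \<phi> A) \<mu>"
    then have ?null
      using stationary_mA_null by blast
    with stat sticky show "?null \<and> ?formula"
      using stationary_mA_reduce by blast
  next
    assume "?null \<and> ?formula"
    then have null: ?null and formula: ?formula by blast+
    moreover have "\<forall>z\<in>X. 0 \<le> \<mu> (craving z)"
      using formula sticky_stationary_nonneg[OF \<nu>_nonneg c_less] by simp
    ultimately show "stationary X (mA X R \<nu> \<phi> A) \<mu>"
      unfolding stationary_mA_reduce[OF null] using sticky by blast
  qed
qed

lemma ex1_stationary_mA: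
  assumes "A \<subseteq> X" and "A \<noteq> {}"
  shows "\<exists>!\<mu>. stationary X (mA X R \<nu> \<phi> A) \<mu>"
proof -
  define w where "w = sticky_stationary X (\<lambda>z. \<nu> (craving z)) (menu_persistence X R \<phi> A)"
  define \<mu> where "\<mu> r = (\<Sum>z\<in>X. if r = craving z then w z else 0)" for r
  have "\<mu> (craving v) = w v" if "v \<in> X" for v
  proof -
    have "\<mu> (craving v) = (\<Sum>z\<in>X. if z = v then w z else 0)"
      unfolding \<mu>_def using inj_on_crav[of X R] that by (intro sum.cong) (auto dest: inj_onD)
    then show ?thesis
      using finite_X that by simp
  qed
  moreover have "\<mu> r = 0" if "r \<notin> craving ` X" for r
    unfolding \<mu>_def using that by (intro sum.neutral) auto
  ultimately have "stationary X (mA X R \<nu> \<phi> A) \<mu>"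
    unfolding stationary_mA_iff[OF assms] w_def by blast
  moreover have "\<mu>' = \<mu>''" if "stationary X (mA X R \<nu> \<phi> A) \<mu>'" and "stationary X (mA X R \<nu> \<phi> A) \<mu>''"
    for \<mu>' \<mu>''
  proof
    fix r
    show "\<mu>' r = \<mu>'' r"
      using that unfolding stationary_mA_iff[OF assms] by (cases "r \<in> craving ` X") auto
  qed
  ultimately show ?thesis by blast
qed

lemma pchoice_eq:
  assumes "A \<subseteq> X" and "y \<in> A" and "A = X \<or> y \<noteq> Mx R A"
  shows "pchoice X R \<nu> \<phi> y A = \<nu> (craving y) / (\<Sum>z\<in>X. \<nu> (craving z) / (1 - menu_persistence X R \<phi> A z))"
proof -
  have "A \<noteq> {}" using assms(2) by blast
  let ?w = "sticky_stationary X (\<lambda>z. \<nu> (craving z)) (menu_persistence X R \<phi> A)"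
  have "stationary X (mA X R \<nu> \<phi> A) (nuA X R \<nu> \<phi> A)"
    unfolding nuA_def using ex1_stationary_mA[OF assms(1) \<open>A \<noteq> {}\<close>] by (rule theI')
  then have null: "\<And>r. r \<notin> craving ` X \<Longrightarrow> nuA X R \<nu> \<phi> A r = 0"
    and formula: "\<And>z. z \<in> X \<Longrightarrow> nuA X R \<nu> \<phi> A (craving z) = ?w z"
    unfolding stationary_mA_iff[OF assms(1) \<open>A \<noteq> {}\<close>] by blast+
  have y_X: "y \<in> X" using assms(1,2) by blast
  have c_y: "menu_persistence X R \<phi> A y = 0"
    using menu_persistence_eq[OF assms(1) \<open>A \<noteq> {}\<close> y_X] assms(2) by simp
  have Nset_iff: "craving z \<in> Nset X y A \<longleftrightarrow> z = y" if "z \<in> X" for z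
    using crav_mem_Nset_iff[OF R_LinOrd finite_subset[OF assms(1) finite_X] assms(1,2) that] assms(3) that
    by auto
  have "pchoice X R \<nu> \<phi> y A = (\<Sum>r\<in>LinOrd X. if r \<in> Nset X y A then nuA X R \<nu> \<phi> A r else 0)"
    unfolding pchoice_def
    by (rule sum.mono_neutral_cong_left[OF finite_LinOrd[OF finite_X]]) (auto simp: Nset_def)
  also have "\<dots> = (\<Sum>z\<in>X. if craving z \<in> Nset X y A then nuA X R \<nu> \<phi> A (craving z) else 0)"
    using null by (intro sum_LinOrd_crav[OF finite_X R_LinOrd]) auto
  also have "\<dots> = (\<Sum>z\<in>X. if z = y then ?w z else 0)"
    using Nset_iff formula by (intro sum.cong) auto
  also have "\<dots> = ?w y"
    using finite_X y_X by simp
  also have "\<dots> = \<nu> (craving y) / (\<Sum>z\<in>X. \<nu> (craving z) / (1 - menu_persistence X R \<phi> A z))"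
    unfolding sticky_stationary_def c_y by simp
  finally show ?thesis .
qed

lemma pchoice_full_menu:
  assumes "y \<in> X"
  shows "pchoice X R \<nu> \<phi> y X = \<nu> (craving y)"
proof -
  have "menu_persistence X R \<phi> X z = 0" if "z \<in> X" for z
    using menu_persistence_eq[of X z] that by auto
  then show ?thesis
    using pchoice_eq[of X y] assms \<nu>_craving_sum by simp
qed

lemma pchoice_remove:
  assumes "x \<in> X" and "y \<in> X - {x}" and "y \<noteq> Mx R (X - {x})"
  defines "u \<equiv> \<phi> (Mx R (X - {x})) x"
  shows "pchoice X R \<nu> \<phi> y (X - {x}) = \<nu> (craving y) / (1 + \<nu> (craving x) * (u / (1 - u)))"
proof -
  let ?c = "menu_persistence X R \<phi> (X - {x})"
  have "X - {x} \<noteq> {}" using assms(2) by blast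
  then have c_eq: "?c z = (if z = x then u else 0)" if "z \<in> X" for z
    using menu_persistence_eq[of "X - {x}" z] that unfolding u_def by auto
  have "u < 1"
    using menu_persistence_range[OF _ \<open>X - {x} \<noteq> {}\<close> assms(1)] c_eq[OF assms(1)] by simp
  have "(\<Sum>z\<in>X. \<nu> (craving z) / (1 - ?c z)) = \<nu> (craving x) / (1 - u) + (\<Sum>z\<in>X - {x}. \<nu> (craving z))"
    using c_eq assms(1) finite_X by (simp add: sum.remove)
  also have "(\<Sum>z\<in>X - {x}. \<nu> (craving z)) = 1 - \<nu> (craving x)"
    using \<nu>_craving_sum assms(1) finite_X by (simp add: sum_diff1)
  also have "\<nu> (craving x) / (1 - u) + (1 - \<nu> (craving x)) = 1 + \<nu> (craving x) * (u / (1 - u))"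
    using \<open>u < 1\<close> by (simp add: field_simps)
  finally show ?thesis
    using pchoice_eq[of "X - {x}" y] assms(2,3) by auto
qed

end

theorem proposition2:
  fixes X :: "'a set" and R :: "'a rel" and \<nu> :: "'a rel \<Rightarrow> real"
    and \<phi> \<phi>' :: "'a \<Rightarrow> 'a \<Rightarrow> real" and x y :: 'a
  assumes "pcr X R \<nu> \<phi>" and "pcr X R \<nu> \<phi>'"
    and "x \<in> X" and "y \<in> X - {x}" and "y \<noteq> Mx R (X - {x})"
  shows "pchoice X R \<nu> \<phi> y X - pchoice X R \<nu> \<phi> y (X - {x})
           > pchoice X R \<nu> \<phi>' y X - pchoice X R \<nu> \<phi>' y (X - {x})
         \<longleftrightarrow> \<phi> (Mx R (X - {x})) x > \<phi>' (Mx R (X - {x})) x"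
proof -
  interpret p: persistent_craving X R \<nu> \<phi> using assms(1) by unfold_locales
  interpret p': persistent_craving X R \<nu> \<phi>' using assms(2) by unfold_locales
  let ?m = "Mx R (X - {x})"
  have "?m \<in> X - {x}"
    using Mx_mem[OF p.R_LinOrd _ _ Diff_subset] p.finite_X assms(4) by blast
  then have "\<phi> ?m x \<in> {0..<1}" and "\<phi>' ?m x \<in> {0..<1}"
    using p.persistent p'.persistent assms(3) unfolding persistence_def by auto
  moreover have "0 < \<nu> (crav X R y)" and "0 < \<nu> (crav X R x)"
    using p.\<nu>_craving_pos assms(3,4) by auto
  ultimately show ?thesis
    using strict_mono_on_less[OF strict_mono_on_odds_loss] assms(3-5)
      p.pchoice_full_menu p.pchoice_remove p'.pchoice_full_menu p'.pchoice_remove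
    by simp
qed

end
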